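(* Assume (A3). Then, almost surely in $X_1,\dots,X_n$, for every $\delta>0$, $$\mathbb E_\varepsilon\Big[\sup_{f\in\mathcal F_b,\ \mathbb E_n[\xi_f^2(X)]\le\delta}\frac1n\sum_{i=1}^n\varepsilon_i\xi_f(X_i)\Big]\le\sqrt{10}\,(\|f_{\mathcal H}\|_K\vee1)\,\widehat R_x(\delta).$$
   Context: $\mathcal Z\subseteq\mathbb R^r$, $\mathcal X\subseteq\mathbb R^p$; $Z$ random in $\mathcal Z$ with law $\rho$, $\mathcal L^2(\rho)$ with $\langle\cdot,\cdot\rangle_\rho$; $K$ a kernel on $\mathcal Z$ with RKHS $\mathcal H_K$ and norm $\|\cdot\|_K$; $f_{\mathcal H}\in\mathcal H_K$ fixed. (A3) $L_Kf=\int K(z,\cdot)f(z)d\rho(z)=\sum_j\mu_j\langle\phi_j,f\rangle_\rho\phi_j$ with nonincreasing $\mu_j\ge0$, $\mu_1>0$, $\{\phi_j\}$ orthonormal basis of $\mathcal L^2(\rho)$. $\widehat g:\mathcal X\to\mathcal Z$ fixed measurable; $X_1,\dots,X_n$ points of $\mathcal X$; $\mathbb E_n[F(X)]=\frac1n\sum_iF(X_i)$. $\mathcal F_b=\{f\in\mathcal H_K:\|f-f_{\mathcal H}\|_K\le3\|f_{\mathcal H}\|_K\}$; $\xi_f(x)=f(\widehat g(x))-f_{\mathcal H}(\widehat g(x))$. $\varepsilon_1,\dots,\varepsilon_n$ are i.i.d. Rademacher signs and $\mathbb E_\varepsilon$ is expectation over them only. $\mathbf K_x$ is the $n\times n$ matrix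 with entries $n^{-1}K(\widehat g(X_i),\widehat g(X_j))$, eigenvalues $\widehat\mu_{x,1}\ge\dots\ge\widehat\mu_{x,n}$, and $\widehat R_x(\delta)=(\frac1n\sum_{j=1}^n\min\{\delta,\widehat\mu_{x,j}\})^{1/2}$. *)

theory Defs
  imports "HOL-Probability.Probability" "Jordan_Normal_Form.Char_Poly"
begin

definition psd_kernel :: "'z set \<Rightarrow> ('z \<Rightarrow> 'z \<Rightarrow> real) \<Rightarrow> bool" where
  "psd_kernel Zs K \<longleftrightarrow> (\<forall>z\<in>Zs. \<forall>w\<in>Zs. K z w = K w z) \<and>
     (\<forall>(m::nat) (zs::nat \<Rightarrow> 'z) (c::nat \<Rightarrow> real). (\<forall>i<m. zs i \<in> Zs) \<longrightarrow>
        0 \<le> (\<Sum>i<m. \<Sum>j<m. c i * c j * K (zs i) (zs j)))"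

definition ksec :: "'z set \<Rightarrow> ('z \<Rightarrow> 'z \<Rightarrow> real) \<Rightarrow> 'z \<Rightarrow> 'z \<Rightarrow> real" where
  "ksec Zs K z = (\<lambda>w. if w \<in> Zs then K z w else 0)"

definition rkhs :: "'z set \<Rightarrow> ('z \<Rightarrow> 'z \<Rightarrow> real) \<Rightarrow> ('z \<Rightarrow> real) set
    \<Rightarrow> (('z \<Rightarrow> real) \<Rightarrow> ('z \<Rightarrow> real) \<Rightarrow> real) \<Rightarrow> bool" where
  "rkhs Zs K H ip \<longleftrightarrow>
     (\<forall>f\<in>H. \<forall>z. z \<notin> Zs \<longrightarrow> f z = 0) \<and>
     (\<lambda>z. 0) \<in> H \<and> (\<forall>f\<in>H. \<forall>g\<in>H. (\<lambda>z. f z + g z) \<in> H) \<and> (\<forall>f\<in>H. \<forall>a::real. (\<lambda>z. a * f z) \<in> H) \<and>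
     (\<forall>f\<in>H. \<forall>g\<in>H. ip f g = ip g f) \<and>
     (\<forall>f\<in>H. \<forall>g\<in>H. \<forall>h\<in>H. ip (\<lambda>z. f z + g z) h = ip f h + ip g h) \<and>
     (\<forall>f\<in>H. \<forall>g\<in>H. \<forall>a::real. ip (\<lambda>z. a * f z) g = a * ip f g) \<and>
     (\<forall>f\<in>H. 0 \<le> ip f f) \<and> (\<forall>f\<in>H. ip f f = 0 \<longrightarrow> f = (\<lambda>z. 0)) \<and>
     (\<forall>s::nat \<Rightarrow> 'z \<Rightarrow> real. (\<forall>m. s m \<in> H) \<longrightarrow>
        (\<forall>e>0. \<exists>N. \<forall>m\<ge>N. \<forall>k\<ge>N. ip (\<lambda>z. s m z - s k z) (\<lambda>z. s m z - s k z) < e) \<longrightarrow>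
        (\<exists>f\<in>H. (\<lambda>m. ip (\<lambda>z. s m z - f z) (\<lambda>z. s m z - f z)) \<longlonglongrightarrow> 0)) \<and>
     (\<forall>z\<in>Zs. ksec Zs K z \<in> H) \<and>
     (\<forall>f\<in>H. \<forall>z\<in>Zs. ip f (ksec Zs K z) = f z)"

definition rk_norm :: "(('z \<Rightarrow> real) \<Rightarrow> ('z \<Rightarrow> real) \<Rightarrow> real) \<Rightarrow> ('z \<Rightarrow> real) \<Rightarrow> real" where
  "rk_norm ip f = sqrt (ip f f)"

definition L2 :: "'z measure \<Rightarrow> ('z \<Rightarrow> real) set" where
  "L2 \<rho> = {f. f \<in> borel_measurable \<rho> \<and> integrable \<rho> (\<lambda>z. (f z)\<^sup>2)}"

definition l2ip :: "'z measure \<Rightarrow> ('z \<Rightarrow> real) \<Rightarrow> ('z \<Rightarrow> real) \<Rightarrow> real" where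
  "l2ip \<rho> f g = (\<integral>z. f z * g z \<partial>\<rho>)"

definition LK :: "'z measure \<Rightarrow> ('z \<Rightarrow> 'z \<Rightarrow> real) \<Rightarrow> ('z \<Rightarrow> real) \<Rightarrow> 'z \<Rightarrow> real" where
  "LK \<rho> K f = (\<lambda>w. \<integral>z. K z w * f z \<partial>\<rho>)"

text \<open>The index set J is {1,2,...} or an initial segment {1..N} (finite-dimensional L2).\<close>
definition assumption_A3 :: "'z measure \<Rightarrow> ('z \<Rightarrow> 'z \<Rightarrow> real) \<Rightarrow> nat set
    \<Rightarrow> (nat \<Rightarrow> real) \<Rightarrow> (nat \<Rightarrow> 'z \<Rightarrow> real) \<Rightarrow> bool" where
  "assumption_A3 \<rho> K J \<mu> \<phi> \<longleftrightarrow>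
     1 \<in> J \<and> (\<forall>j\<in>J. 1 \<le> j) \<and> (\<forall>j\<in>J. \<forall>i. 1 \<le> i \<and> i \<le> j \<longrightarrow> i \<in> J) \<and>
     (\<forall>i\<in>J. \<forall>j\<in>J. i \<le> j \<longrightarrow> \<mu> j \<le> \<mu> i) \<and> (\<forall>j\<in>J. 0 \<le> \<mu> j) \<and> 0 < \<mu> 1 \<and>
     (\<forall>j\<in>J. \<phi> j \<in> L2 \<rho>) \<and>
     (\<forall>i\<in>J. \<forall>j\<in>J. l2ip \<rho> (\<phi> i) (\<phi> j) = (if i = j then 1 else 0)) \<and>
     (\<forall>f\<in>L2 \<rho>. (\<lambda>N. \<integral>z. (f z - (\<Sum>j\<in>{j\<in>J. j \<le> N}. l2ip \<rho> (\<phi> j) f * \<phi> j z))\<^sup>2 \<partial>\<rho>)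
                   \<longlonglongrightarrow> 0) \<and>
     (\<forall>f\<in>L2 \<rho>. (\<forall>w\<in>space \<rho>. integrable \<rho> (\<lambda>z. K z w * f z)) \<and> LK \<rho> K f \<in> L2 \<rho> \<and>
        (\<lambda>N. \<integral>z. (LK \<rho> K f z - (\<Sum>j\<in>{j\<in>J. j \<le> N}. \<mu> j * l2ip \<rho> (\<phi> j) f * \<phi> j z))\<^sup>2 \<partial>\<rho>)
          \<longlonglongrightarrow> 0)"

definition gram_mat :: "('z \<Rightarrow> 'z \<Rightarrow> real) \<Rightarrow> ('x \<Rightarrow> 'z) \<Rightarrow> (nat \<Rightarrow> 'x) \<Rightarrow> nat \<Rightarrow> real Matrix.mat" where
  "gram_mat K g X n = Matrix.mat n n (\<lambda>(i, j). K (g (X i)) (g (X j)) / real n)"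

text \<open>Eigenvalues (with algebraic multiplicity) in nonincreasing order: the roots of
  the characteristic polynomial listed decreasingly.\<close>
definition sorted_eigs :: "real Matrix.mat \<Rightarrow> real list" where
  "sorted_eigs A = (SOME es. sorted_wrt (\<ge>) es \<and> char_poly A = (\<Prod>e\<leftarrow>es. [:- e, 1:]))"

definition Rhat :: "('z \<Rightarrow> 'z \<Rightarrow> real) \<Rightarrow> ('x \<Rightarrow> 'z) \<Rightarrow> (nat \<Rightarrow> 'x) \<Rightarrow> nat \<Rightarrow> real \<Rightarrow> real" where
  "Rhat K g X n \<delta> = sqrt ((1 / real n) * (\<Sum>j<n. min \<delta> (sorted_eigs (gram_mat K g X n) ! j)))"

definition rademacher_exp :: "nat \<Rightarrow> ((nat \<Rightarrow> real) \<Rightarrow> real) \<Rightarrow> real" where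
  "rademacher_exp n S = (\<Sum>\<epsilon>\<in>PiE {..<n} (\<lambda>_. {-1, 1}). S \<epsilon>) / 2 ^ n"

end

theory Submission
  imports Defs
begin

(* Write h = f - f_H, z_i = g(X_i) and G = (K(z_i, z_k)) = U diag(L) U^T for the Gram matrix.
   The reproducing property gives 2 <a, h(z)> - a^T G a <= ||h||_K^2 for every vector a.
   Together with ||h(z)||^2 <= n delta and ||h||_K^2 <= 9 M^2, where M = max ||f_H||_K 1,
   splitting a test vector between these two constraints in the eigenbasis of G yields
   <eps, h(z)> <= 1/(2s) + (s/2) sum_j (U^T eps)_j^2 gamma_j for every s > 0, where
   gamma_j = L_j / (L_j/(10 n delta) + 1/(10 M^2)) <= 10 n M^2 min(delta, L_j/n).
   Averaging over the signs replaces (U^T eps)_j^2 by 1, and optimising in s bounds the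
   left-hand side by sqrt(sum_j gamma_j)/n <= sqrt 10 M Rhat(delta). *)

section \<open>Orthonormal matrices\<close>

definition orthonormal_matrix :: "nat \<Rightarrow> (nat \<Rightarrow> nat \<Rightarrow> real) \<Rightarrow> bool" where
  "orthonormal_matrix n U \<longleftrightarrow>
     (\<forall>i<n. \<forall>k<n. (\<Sum>j<n. U i j * U k j) = of_bool (i = k)) \<and>
     (\<forall>j<n. \<forall>l<n. (\<Sum>i<n. U i j * U i l) = of_bool (j = l))"

lemma orthonormal_matrix_rows:
  "orthonormal_matrix n U \<Longrightarrow> i < n \<Longrightarrow> k < n \<Longrightarrow> (\<Sum>j<n. U i j * U k j) = of_bool (i = k)"
  unfolding orthonormal_matrix_def by blast

lemma orthonormal_matrix_cols:
  "orthonormal_matrix n U \<Longrightarrow> j < n \<Longrightarrow> l < n \<Longrightarrow> (\<Sum>i<n. U i j * U i l) = of_bool (j = l)"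
  unfolding orthonormal_matrix_def by blast

lemma sum_lessThan_rotate3:
  "(\<Sum>i<n. \<Sum>j<m. \<Sum>k<p. f i j k) = (\<Sum>j<m. \<Sum>k<p. \<Sum>i<n. f i j k :: 'a::comm_monoid_add)"
  by (subst sum.swap, rule sum.cong[OF refl], rule sum.swap)

lemma orthonormal_matrix_transpose_inner:
  assumes U: "orthonormal_matrix n U"
  shows "(\<Sum>j<n. (\<Sum>i<n. U i j * x i) * (\<Sum>k<n. U k j * y k)) = (\<Sum>i<n. x i * y i)"
proof -
  have "(\<Sum>j<n. (\<Sum>i<n. U i j * x i) * (\<Sum>k<n. U k j * y k))
      = (\<Sum>j<n. \<Sum>i<n. \<Sum>k<n. x i * y k * (U i j * U k j))"
    by (simp add: sum_product mult_ac)
  also have "\<dots> = (\<Sum>i<n. \<Sum>k<n. \<Sum>j<n. x i * y k * (U i j * U k j))"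
    by (rule sum_lessThan_rotate3)
  also have "\<dots> = (\<Sum>i<n. \<Sum>k<n. x i * y k * (\<Sum>j<n. U i j * U k j))"
    by (simp add: sum_distrib_left)
  also have "\<dots> = (\<Sum>i<n. x i * y i)"
    using U by (simp add: orthonormal_matrix_rows)
  finally show ?thesis .
qed

lemma orthonormal_matrix_transpose_mult:
  assumes U: "orthonormal_matrix n U" and j: "j < n"
  shows "(\<Sum>i<n. U i j * (\<Sum>p<n. U i p * x p)) = x j"
proof -
  have "(\<Sum>i<n. U i j * (\<Sum>p<n. U i p * x p)) = (\<Sum>i<n. \<Sum>p<n. x p * (U i j * U i p))"
    by (simp add: sum_distrib_left mult_ac)
  also have "\<dots> = (\<Sum>p<n. x p * (\<Sum>i<n. U i j * U i p))"
    by (subst sum.swap) (simp add: sum_distrib_left)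
  also have "\<dots> = x j"
    using U j by (simp add: orthonormal_matrix_cols)
  finally show ?thesis .
qed

lemma orthonormal_matrix_mult_transpose:
  assumes U: "orthonormal_matrix n U" and i: "i < n"
  shows "(\<Sum>j<n. U i j * (\<Sum>k<n. U k j * x k)) = x i"
proof -
  have "(\<Sum>j<n. U i j * (\<Sum>k<n. U k j * x k)) = (\<Sum>j<n. \<Sum>k<n. x k * (U i j * U k j))"
    by (simp add: sum_distrib_left mult_ac)
  also have "\<dots> = (\<Sum>k<n. x k * (\<Sum>j<n. U i j * U k j))"
    by (subst sum.swap) (simp add: sum_distrib_left)
  also have "\<dots> = x i"
    using U i by (simp add: orthonormal_matrix_rows)
  finally show ?thesis .
qed

lemma orthonormal_matrix_quadratic_form:
  assumes U: "orthonormal_matrix n U" and G: "\<forall>i<n. \<forall>k<n. G i k = (\<Sum>j<n. U i j * L j * U k j)"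
  shows "(\<Sum>i<n. \<Sum>k<n. (\<Sum>p<n. U i p * x p) * (\<Sum>q<n. U k q * x q) * G i k)
       = (\<Sum>j<n. L j * (x j)\<^sup>2)"
proof -
  define a where "a i = (\<Sum>p<n. U i p * x p)" for i
  have "(\<Sum>i<n. \<Sum>k<n. a i * a k * G i k) = (\<Sum>i<n. \<Sum>k<n. \<Sum>j<n. L j * (U i j * a i) * (U k j * a k))"
    using G by (intro sum.cong refl) (simp add: sum_distrib_left mult_ac)
  also have "\<dots> = (\<Sum>i<n. \<Sum>j<n. \<Sum>k<n. L j * (U i j * a i) * (U k j * a k))"
    by (rule sum.cong[OF refl], rule sum.swap)
  also have "\<dots> = (\<Sum>j<n. \<Sum>i<n. \<Sum>k<n. L j * (U i j * a i) * (U k j * a k))"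
    by (rule sum.swap)
  also have "\<dots> = (\<Sum>j<n. L j * (\<Sum>i<n. U i j * a i) * (\<Sum>k<n. U k j * a k))"
    by (simp only: mult.assoc sum_product) (simp add: sum_distrib_left mult.assoc)
  also have "\<dots> = (\<Sum>j<n. L j * (x j)\<^sup>2)"
    using orthonormal_matrix_transpose_mult[OF U] unfolding a_def
    by (intro sum.cong refl) (simp add: power2_eq_square)
  finally show ?thesis unfolding a_def .
qed

lemma orthonormal_matrix_mult:
  assumes P: "orthonormal_matrix n P" and Q: "orthonormal_matrix n Q"
  shows "orthonormal_matrix n (\<lambda>i j. \<Sum>l<n. P i l * Q l j)"
proof -
  have "(\<Sum>j<n. (\<Sum>l<n. P i l * Q l j) * (\<Sum>r<n. P k r * Q r j)) = of_bool (i = k)"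
    if "i < n" "k < n" for i k
  proof -
    have "(\<Sum>j<n. (\<Sum>l<n. P i l * Q l j) * (\<Sum>r<n. P k r * Q r j))
        = (\<Sum>j<n. \<Sum>l<n. \<Sum>r<n. P i l * P k r * (Q l j * Q r j))"
      by (simp add: sum_product mult_ac)
    also have "\<dots> = (\<Sum>l<n. \<Sum>r<n. P i l * P k r * (\<Sum>j<n. Q l j * Q r j))"
      by (subst sum_lessThan_rotate3) (simp add: sum_distrib_left)
    also have "\<dots> = of_bool (i = k)"
      using P Q that by (simp add: orthonormal_matrix_rows)
    finally show ?thesis .
  qed
  moreover have "(\<Sum>i<n. (\<Sum>l<n. P i l * Q l j) * (\<Sum>r<n. P i r * Q r k)) = of_bool (j = k)"
    if "j < n" "k < n" for j k
  proof -
    have "(\<Sum>i<n. (\<Sum>l<n. P i l * Q l j) * (\<Sum>r<n. P i r * Q r k))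
        = (\<Sum>i<n. \<Sum>l<n. \<Sum>r<n. Q l j * Q r k * (P i l * P i r))"
      by (simp add: sum_product mult_ac)
    also have "\<dots> = (\<Sum>l<n. \<Sum>r<n. Q l j * Q r k * (\<Sum>i<n. P i l * P i r))"
      by (subst sum_lessThan_rotate3) (simp add: sum_distrib_left)
    also have "\<dots> = of_bool (j = k)"
      using P Q that by (simp add: orthonormal_matrix_cols)
    finally show ?thesis .
  qed
  ultimately show ?thesis unfolding orthonormal_matrix_def by blast
qed

section \<open>The spectral theorem for real symmetric matrices\<close>

lemma matrix_complex_eigenvector:
  fixes A :: "nat \<Rightarrow> nat \<Rightarrow> real"
  assumes N: "0 < N"
  shows "\<exists>v a. (\<exists>i<N. v i \<noteq> 0) \<and> (\<forall>i<N. (\<Sum>j<N. complex_of_real (A i j) * v j) = a * v i)"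
proof -
  define M where "M = Matrix.mat N N (\<lambda>(i, j). complex_of_real (A i j))"
  have M: "M \<in> carrier_mat N N" unfolding M_def by simp
  obtain as where cp: "char_poly M = (\<Prod>a\<leftarrow>as. [:- a, 1:])" and len: "length as = N"
    using char_poly_factorized[OF M] by blast
  with N obtain a as' where "as = a # as'" by (cases as) auto
  then have "poly (char_poly M) a = 0" unfolding cp by simp
  then have "eigenvalue M a" using eigenvalue_root_char_poly[OF M] by simp
  then obtain v where "eigenvector M v a" unfolding eigenvalue_def by blast
  then have v: "v \<in> carrier_vec N" and v0: "v \<noteq> 0\<^sub>v N" and Mv: "M *\<^sub>v v = a \<cdot>\<^sub>v v"
    unfolding eigenvector_def using M by auto
  have "\<exists>i<N. v $ i \<noteq> 0"
    using v v0 by (metis carrier_vecD eq_vecI index_zero_vec(1,2))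
  moreover have "(\<Sum>j<N. complex_of_real (A i j) * v $ j) = a * v $ i" if "i < N" for i
    using arg_cong[OF Mv, of "\<lambda>w. w $ i"] that v
    by (simp add: M_def scalar_prod_def atLeast0LessThan)
  ultimately show ?thesis by blast
qed

lemma symmetric_matrix_bilinear_swap:
  assumes sym: "\<forall>i<N. \<forall>j<N. A i j = A j i"
  shows "(\<Sum>i<N. x i * (\<Sum>j<N. A i j * y j)) = (\<Sum>i<N. y i * (\<Sum>j<N. A i j * x j :: real))"
proof -
  have "(\<Sum>i<N. x i * (\<Sum>j<N. A i j * y j)) = (\<Sum>i<N. \<Sum>j<N. y j * A j i * x i)"
    using sym by (simp add: sum_distrib_left mult_ac)
  also have "\<dots> = (\<Sum>i<N. y i * (\<Sum>j<N. A i j * x j))"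
    by (subst sum.swap) (simp add: sum_distrib_left mult_ac)
  finally show ?thesis .
qed

lemma unit_eigenvector_of_nonzero:
  fixes A :: "nat \<Rightarrow> nat \<Rightarrow> real"
  assumes w: "\<forall>i<N. (\<Sum>j<N. A i j * w j) = \<mu> * w i" and i: "i < N" "w i \<noteq> 0"
  shows "\<exists>y. (\<Sum>i<N. (y i)\<^sup>2) = 1 \<and> (\<forall>i<N. (\<Sum>j<N. A i j * y j) = \<mu> * y i)"
proof -
  define s where "s = (\<Sum>i<N. (w i)\<^sup>2)"
  have "0 < (w i)\<^sup>2" using i by simp
  also have "(w i)\<^sup>2 \<le> s" unfolding s_def using i by (intro member_le_sum) auto
  finally have s: "0 < s" .
  have "(\<Sum>i<N. (w i / sqrt s)\<^sup>2) = 1"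
    using s by (simp add: power_divide s_def[symmetric] sum_divide_distrib[symmetric])
  moreover have "\<forall>i<N. (\<Sum>j<N. A i j * (w j / sqrt s)) = \<mu> * (w i / sqrt s)"
    using w by (simp add: sum_divide_distrib[symmetric])
  ultimately show ?thesis by (intro exI[of _ "\<lambda>j. w j / sqrt s"]) simp
qed

lemma symmetric_matrix_unit_eigenvector:
  fixes A :: "nat \<Rightarrow> nat \<Rightarrow> real"
  assumes N: "0 < N" and sym: "\<forall>i<N. \<forall>j<N. A i j = A j i"
  shows "\<exists>y \<mu>. (\<Sum>i<N. (y i)\<^sup>2) = 1 \<and> (\<forall>i<N. (\<Sum>j<N. A i j * y j) = \<mu> * y i)"
proof -
  obtain v a where nz: "\<exists>i<N. v i \<noteq> 0"
    and ev: "\<forall>i<N. (\<Sum>j<N. complex_of_real (A i j) * v j) = a * v i"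
    using matrix_complex_eigenvector[OF N] by blast
  define x where "x j = Re (v j)" for j
  define y where "y j = Im (v j)" for j
  have Ax: "(\<Sum>j<N. A i j * x j) = Re a * x i - Im a * y i" if "i < N" for i
    using arg_cong[OF ev[rule_format, OF that], of Re] by (simp add: Re_sum x_def y_def)
  have Ay: "(\<Sum>j<N. A i j * y j) = Im a * x i + Re a * y i" if "i < N" for i
    using arg_cong[OF ev[rule_format, OF that], of Im] by (simp add: Im_sum x_def y_def)
  obtain i where i: "i < N" "x i \<noteq> 0 \<or> y i \<noteq> 0"
    using nz unfolding x_def y_def by (metis complex_eqI zero_complex.simps)
  \<comment> \<open>By symmetry of A the eigenvalue is real.\<close>
  have "(\<Sum>i<N. x i * (\<Sum>j<N. A i j * y j)) = (\<Sum>i<N. Im a * (x i)\<^sup>2 + Re a * x i * y i)"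
    by (intro sum.cong refl, simp only: lessThan_iff Ay) (simp add: power2_eq_square algebra_simps)
  moreover have "(\<Sum>i<N. y i * (\<Sum>j<N. A i j * x j)) = (\<Sum>i<N. Re a * x i * y i - Im a * (y i)\<^sup>2)"
    by (intro sum.cong refl, simp only: lessThan_iff Ax) (simp add: power2_eq_square algebra_simps)
  ultimately have "Im a * (\<Sum>i<N. (x i)\<^sup>2 + (y i)\<^sup>2) = 0"
    using symmetric_matrix_bilinear_swap[OF sym, of x y]
    by (simp add: sum.distrib sum_subtractf sum_distrib_left algebra_simps)
  moreover have "0 < (\<Sum>i<N. (x i)\<^sup>2 + (y i)\<^sup>2)"
  proof -
    have "0 < (x i)\<^sup>2 + (y i)\<^sup>2" using i(2) by (simp add: sum_power2_gt_zero_iff)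
    also have "\<dots> \<le> (\<Sum>i<N. (x i)\<^sup>2 + (y i)\<^sup>2)" using i(1) by (intro member_le_sum) auto
    finally show ?thesis .
  qed
  ultimately have "Im a = 0" by simp
  then show ?thesis
    using i unit_eigenvector_of_nonzero[of N A x "Re a" i] unit_eigenvector_of_nonzero[of N A y "Re a" i]
      Ax Ay by auto
qed

lemma householder_orthonormal:
  assumes \<kappa>: "\<kappa> * \<kappa> * (\<Sum>j<N. (x j)\<^sup>2) = 2 * \<kappa>"
  shows "orthonormal_matrix N (\<lambda>i k. of_bool (i = k) - \<kappa> * x i * x k)"
proof -
  define H where "H = (\<lambda>i k. of_bool (i = k) - \<kappa> * x i * x k)"
  have "(\<Sum>j<N. H i j * H k j) = of_bool (i = k)" if "i < N" "k < N" for i k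
  proof -
    have expand: "H i j * H k j = of_bool (i = k) * of_bool (i = j) - \<kappa> * x k * (x j * of_bool (i = j))
        - \<kappa> * x i * (x j * of_bool (k = j)) + \<kappa> * \<kappa> * x i * x k * (x j)\<^sup>2" for j
      by (cases "i = j"; cases "k = j") (simp_all add: H_def power2_eq_square algebra_simps)
    have "(\<Sum>j<N. H i j * H k j) = of_bool (i = k) * (\<Sum>j<N. of_bool (i = j))
        - \<kappa> * x k * (\<Sum>j<N. x j * of_bool (i = j)) - \<kappa> * x i * (\<Sum>j<N. x j * of_bool (k = j))
        + \<kappa> * \<kappa> * x i * x k * (\<Sum>j<N. (x j)\<^sup>2)"
      unfolding expand by (simp only: sum.distrib sum_subtractf sum_distrib_left)
    also have "\<dots> = of_bool (i = k) + (\<kappa> * \<kappa> * (\<Sum>j<N. (x j)\<^sup>2) - 2 * \<kappa>) * x i * x k"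
      using that by (simp add: algebra_simps)
    finally show ?thesis using \<kappa> by simp
  qed
  moreover have "(\<Sum>i<N. H i j * H i l) = (\<Sum>i<N. H j i * H l i)" for j l
    by (intro sum.cong refl) (simp add: H_def mult_ac)
  ultimately have "orthonormal_matrix N H"
    unfolding orthonormal_matrix_def by simp
  then show ?thesis
    unfolding H_def .
qed

lemma orthonormal_matrix_with_first_column:
  assumes N: "0 < N" and y: "(\<Sum>i<N. (y i)\<^sup>2) = 1"
  shows "\<exists>H. orthonormal_matrix N H \<and> (\<forall>i<N. H i 0 = y i)"
proof -
  \<comment> \<open>The Householder reflection along e0 - y; if y = e0, then c = 0, \<kappa> = 2 / 0 = 0 and H is the identity.\<close>
  define x where "x i = of_bool (i = 0) - y i" for i
  define c where "c = (\<Sum>i<N. (x i)\<^sup>2)"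
  define \<kappa> where "\<kappa> = 2 / c"
  have "(x i)\<^sup>2 = (1 - 2 * y i) * of_bool (i = 0) + (y i)\<^sup>2" for i
    by (cases "i = 0") (simp_all add: x_def power2_diff)
  then have c: "c = 2 * x 0"
    using N y by (simp add: c_def sum.distrib x_def)
  have "\<kappa> * \<kappa> * c = 2 * \<kappa>"
    by (cases "c = 0") (simp_all add: \<kappa>_def)
  then have "orthonormal_matrix N (\<lambda>i k. of_bool (i = k) - \<kappa> * x i * x k)"
    unfolding c_def by (rule householder_orthonormal)
  moreover have "of_bool (i = 0) - \<kappa> * x i * x 0 = y i" if "i < N" for i
  proof (cases "x 0 = 0")
    case True
    then have "\<forall>i\<in>{..<N}. (x i)\<^sup>2 = 0"
      using c by (subst sum_nonneg_eq_0_iff[symmetric]) (auto simp: c_def)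
    then show ?thesis using that by (simp add: x_def)
  next
    case False
    then have "\<kappa> * x 0 = 1" by (simp add: \<kappa>_def c)
    then have "of_bool (i = 0) - \<kappa> * x i * x 0 = of_bool (i = 0) - x i"
      by (metis mult.assoc mult.commute mult_1_right)
    then show ?thesis by (simp add: x_def)
  qed
  ultimately show ?thesis by (intro exI[of _ "\<lambda>i k. of_bool (i = k) - \<kappa> * x i * x k"]) simp
qed

lemma orthonormal_matrix_extend:
  assumes V: "orthonormal_matrix m V"
  shows "orthonormal_matrix (Suc m)
           (\<lambda>p j. if p = 0 then of_bool (j = 0) else if j = 0 then 0 else V (p - 1) (j - 1))"
  using V unfolding orthonormal_matrix_def
  by (auto simp: sum.lessThan_Suc_shift less_Suc_eq_0_disj simp del: sum.lessThan_Suc)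

lemma orthonormal_conjugate_decomposition:
  assumes H: "orthonormal_matrix n H" and W: "orthonormal_matrix n W"
    and B: "\<forall>p<n. \<forall>q<n. (\<Sum>a<n. H a p * (\<Sum>b<n. A a b * H b q)) = (\<Sum>j<n. W p j * L j * W q j)"
  shows "\<exists>U. orthonormal_matrix n U \<and> (\<forall>i<n. \<forall>k<n. A i k = (\<Sum>j<n. U i j * L j * U k j))"
proof -
  define U where "U i j = (\<Sum>l<n. H i l * W l j)" for i j
  have "A i k = (\<Sum>j<n. U i j * L j * U k j)" if "i < n" "k < n" for i k
  proof -
    have "A i k = (\<Sum>q<n. H k q * (\<Sum>b<n. H b q * A i b))"
      using orthonormal_matrix_mult_transpose[OF H that(2)] by simp
    also have "\<dots> = (\<Sum>q<n. H k q * (\<Sum>p<n. H i p * (\<Sum>a<n. H a p * (\<Sum>b<n. A a b * H b q))))"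
    proof (intro sum.cong refl)
      fix q
      show "H k q * (\<Sum>b<n. H b q * A i b) = H k q * (\<Sum>p<n. H i p * (\<Sum>a<n. H a p * (\<Sum>b<n. A a b * H b q)))"
        using orthonormal_matrix_mult_transpose[OF H that(1), of "\<lambda>a. \<Sum>b<n. A a b * H b q"]
        by (simp add: mult_ac)
    qed
    also have "\<dots> = (\<Sum>q<n. \<Sum>p<n. \<Sum>j<n. H i p * W p j * L j * (H k q * W q j))"
      using B by (simp add: sum_distrib_left mult_ac)
    also have "\<dots> = (\<Sum>j<n. U i j * L j * U k j)"
      unfolding U_def
      by (subst sum.swap, subst sum_lessThan_rotate3) (simp add: sum_distrib_left sum_distrib_right mult_ac)
    finally show ?thesis .
  qed
  moreover have "orthonormal_matrix n U"
    unfolding U_def by (rule orthonormal_matrix_mult[OF H W])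
  ultimately show ?thesis by blast
qed

lemma symmetric_matrix_spectral_decomposition:
  fixes A :: "nat \<Rightarrow> nat \<Rightarrow> real"
  assumes "\<forall>i<n. \<forall>k<n. A i k = A k i"
  shows "\<exists>U L. orthonormal_matrix n U \<and> (\<forall>i<n. \<forall>k<n. A i k = (\<Sum>j<n. U i j * L j * U k j))"
  using assms
proof (induction n arbitrary: A)
  case 0
  then show ?case by (simp add: orthonormal_matrix_def)
next
  case (Suc m)
  define N where "N = Suc m"
  have sym: "\<forall>i<N. \<forall>k<N. A i k = A k i" using Suc.prems by (simp add: N_def)
  obtain y \<mu> where y: "(\<Sum>i<N. (y i)\<^sup>2) = 1" and ey: "\<forall>i<N. (\<Sum>j<N. A i j * y j) = \<mu> * y i"
    using symmetric_matrix_unit_eigenvector[OF _ sym] by (auto simp: N_def)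
  obtain H where H: "orthonormal_matrix N H" and H0: "\<forall>i<N. H i 0 = y i"
    using orthonormal_matrix_with_first_column[OF _ y] by (auto simp: N_def)
  \<comment> \<open>B = H^T A H is symmetric and has first row and column \<mu> e0, so it reduces to its lower block.\<close>
  define B where "B p q = (\<Sum>a<N. H a p * (\<Sum>b<N. A a b * H b q))" for p q
  have B_swap: "B p q = B q p" for p q
    unfolding B_def using symmetric_matrix_bilinear_swap[OF sym, of "\<lambda>a. H a p" "\<lambda>b. H b q"]
    by simp
  have B_first: "B p 0 = \<mu> * of_bool (p = 0)" "B 0 p = \<mu> * of_bool (p = 0)" if "p < N" for p
  proof -
    have "B p 0 = (\<Sum>a<N. H a p * (\<mu> * y a))"
      unfolding B_def using ey H0 by (intro sum.cong refl) simp
    also have "\<dots> = \<mu> * (\<Sum>a<N. H a p * H a 0)"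
      using H0 by (simp add: sum_distrib_left mult_ac)
    finally show "B p 0 = \<mu> * of_bool (p = 0)"
      using H that by (simp add: orthonormal_matrix_cols)
    then show "B 0 p = \<mu> * of_bool (p = 0)"
      by (simp add: B_swap)
  qed
  obtain V \<nu> where V: "orthonormal_matrix m V"
    and BV: "\<forall>p<m. \<forall>q<m. B (Suc p) (Suc q) = (\<Sum>j<m. V p j * \<nu> j * V q j)"
    using Suc.IH[of "\<lambda>p q. B (Suc p) (Suc q)"] B_swap by blast
  define W where "W p j = (if p = 0 then of_bool (j = 0) else if j = 0 then 0 else V (p - 1) (j - 1))"
    for p j
  define L where "L j = (if j = 0 then \<mu> else \<nu> (j - 1))" for j
  have W: "orthonormal_matrix N W"
    unfolding W_def N_def by (rule orthonormal_matrix_extend[OF V])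
  have "B p q = (\<Sum>j<N. W p j * L j * W q j)" if "p < N" "q < N" for p q
    using that B_first BV unfolding N_def
    by (cases p; cases q) (simp_all add: sum.lessThan_Suc_shift W_def L_def del: sum.lessThan_Suc)
  then show ?case
    using orthonormal_conjugate_decomposition[OF H W] unfolding B_def N_def by blast
qed

section \<open>Eigenvalues as roots of the characteristic polynomial\<close>

lemma order_prod_linear_factors:
  "order (a::real) (\<Prod>e\<leftarrow>es. [:- e, 1:]) = count (mset es) a"
proof (induction es)
  case Nil
  then show ?case by simp
next
  case (Cons e es)
  have "(\<Prod>x\<leftarrow>es. [:- x, 1:]) \<noteq> (0 :: real poly)"
    by (auto simp: prod_list_zero_iff)
  then have "[:- e, 1:] * (\<Prod>x\<leftarrow>es. [:- x, 1:]) \<noteq> (0 :: real poly)"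
    by (metis mult_eq_0_iff pCons_eq_0_iff zero_neq_one)
  then have "order a (\<Prod>x\<leftarrow>e # es. [:- x, 1:]) = order a [:- e, 1:] + order a (\<Prod>x\<leftarrow>es. [:- x, 1:])"
    by (simp add: order_mult del: mult_pCons_left)
  moreover have "order a [:- e, 1:] = (if a = e then 1 else 0)"
    using order_power_n_n[of a 1] by (auto intro: order_0I)
  ultimately show ?case using Cons.IH by simp
qed

lemma sum_sorted_eigs:
  fixes A U :: "nat \<Rightarrow> nat \<Rightarrow> real"
  assumes U: "orthonormal_matrix n U" and AU: "\<forall>i<n. \<forall>k<n. A i k = (\<Sum>j<n. U i j * L j * U k j)"
  shows "(\<Sum>j<n. f (sorted_eigs (Matrix.mat n n (\<lambda>(i, k). A i k)) ! j)) = (\<Sum>j<n. f (L j))"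
proof -
  define M where "M = Matrix.mat n n (\<lambda>(i, k). A i k)"
  define Q where "Q = Matrix.mat n n (\<lambda>(i, j). U i j)"
  define D where "D = Matrix.mat n n (\<lambda>(i, j). if i = j then L i else 0)"
  define ds where "ds = map L [0..<n]"
  have QQt: "Q * transpose_mat Q = 1\<^sub>m n" and QtQ: "transpose_mat Q * Q = 1\<^sub>m n"
    using U unfolding orthonormal_matrix_def
    by (auto intro!: eq_matI simp: Q_def scalar_prod_def atLeast0LessThan)
  have "M = Q * D * transpose_mat Q"
  proof (rule eq_matI)
    fix i k assume "i < dim_row (Q * D * transpose_mat Q)" "k < dim_col (Q * D * transpose_mat Q)"
    then have i: "i < n" and k: "k < n" by (auto simp: Q_def)
    have "(Q * D) $$ (i, j) = U i j * L j" if "j < n" for j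
      using i that by (simp add: Q_def D_def scalar_prod_def atLeast0LessThan if_distrib cong: if_cong)
    then show "M $$ (i, k) = (Q * D * transpose_mat Q) $$ (i, k)"
      using AU i k by (simp add: M_def Q_def D_def scalar_prod_def atLeast0LessThan)
  qed (auto simp: M_def Q_def)
  then have "similar_mat M D"
    unfolding similar_mat_def using QQt QtQ
    by (intro exI similar_mat_witI) (auto simp: M_def D_def Q_def)
  moreover have "char_poly D = (\<Prod>e\<leftarrow>diag_mat D. [:- e, 1:])"
    by (rule char_poly_upper_triangular) (auto simp: D_def upper_triangular_def)
  moreover have "diag_mat D = map L [0..<n]"
    by (simp add: diag_mat_def D_def list_eq_iff_nth_eq)
  ultimately have cp: "char_poly M = (\<Prod>e\<leftarrow>ds. [:- e, 1:])"
    unfolding ds_def using char_poly_similar by metis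
  have "\<exists>es. sorted_wrt (\<ge>) es \<and> char_poly M = (\<Prod>e\<leftarrow>es. [:- e, 1:])"
  proof (intro exI conjI)
    show "sorted_wrt (\<ge>) (rev (sort ds))" by (simp add: sorted_wrt_rev)
    show "char_poly M = (\<Prod>e\<leftarrow>rev (sort ds). [:- e, 1:])"
      unfolding cp by (simp add: prod_mset_prod_list[symmetric])
  qed
  then have "char_poly M = (\<Prod>e\<leftarrow>sorted_eigs M. [:- e, 1:])"
    unfolding sorted_eigs_def by (rule someI2_ex) blast
  then have "mset (sorted_eigs M) = mset ds"
    using cp by (intro multiset_eqI) (metis order_prod_linear_factors)
  then have "length (sorted_eigs M) = n"
    and "sum_list (map f (sorted_eigs M)) = sum_list (map f ds)"
    by (metis ds_def length_map length_upt minus_nat.diff_0 mset_eq_length,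
        metis mset_map sum_mset_sum_list)
  then show ?thesis
    unfolding M_def[symmetric] by (simp add: ds_def sum_list_sum_nth atLeast0LessThan)
qed

section \<open>Rademacher averages\<close>

abbreviation sign_vectors :: "nat \<Rightarrow> (nat \<Rightarrow> real) set" where
  "sign_vectors n \<equiv> PiE {..<n} (\<lambda>_. {-1, 1})"

lemma card_sign_vectors: "card (sign_vectors n) = 2 ^ n"
  by (simp add: card_PiE numeral_2_eq_2)

lemma sum_sign_vectors_mult:
  assumes i: "i < n" and k: "k < n"
  shows "(\<Sum>\<epsilon>\<in>sign_vectors n. \<epsilon> i * \<epsilon> k) = 2 ^ n * of_bool (i = k)"
proof (cases "i = k")
  case True
  have "\<epsilon> i * \<epsilon> i = 1" if "\<epsilon> \<in> sign_vectors n" for \<epsilon>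
    using that i by (auto simp: PiE_def Pi_def)
  then show ?thesis using True by (simp add: card_sign_vectors)
next
  case False
  define flip where "flip \<epsilon> = \<epsilon>(i := - \<epsilon> i)" for \<epsilon> :: "nat \<Rightarrow> real"
  have "flip \<epsilon> \<in> sign_vectors n" if "\<epsilon> \<in> sign_vectors n" for \<epsilon>
    using that i unfolding flip_def by (auto simp: PiE_def Pi_def extensional_def)
  moreover have "flip (flip \<epsilon>) = \<epsilon>" for \<epsilon> unfolding flip_def by auto
  ultimately have "bij_betw flip (sign_vectors n) (sign_vectors n)"
    by (intro bij_betw_byWitness[of _ flip]) auto
  then have "(\<Sum>\<epsilon>\<in>sign_vectors n. \<epsilon> i * \<epsilon> k)
      = (\<Sum>\<epsilon>\<in>sign_vectors n. flip \<epsilon> i * flip \<epsilon> k)"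
    by (rule sum.reindex_bij_betw[symmetric])
  also have "\<dots> = - (\<Sum>\<epsilon>\<in>sign_vectors n. \<epsilon> i * \<epsilon> k)"
    using False by (simp add: flip_def sum_negf)
  finally show ?thesis using False by simp
qed

lemma rademacher_exp_mono:
  "(\<And>\<epsilon>. \<epsilon> \<in> sign_vectors n \<Longrightarrow> S \<epsilon> \<le> T \<epsilon>)
    \<Longrightarrow> rademacher_exp n S \<le> rademacher_exp n T"
  unfolding rademacher_exp_def by (intro divide_right_mono sum_mono) auto

lemma rademacher_exp_affine:
  "rademacher_exp n (\<lambda>\<epsilon>. a + b * F \<epsilon>) = a + b * rademacher_exp n F"
  unfolding rademacher_exp_def
  by (simp add: sum.distrib sum_distrib_left[symmetric] card_sign_vectors add_divide_distrib)

lemma rademacher_exp_sum: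
  "rademacher_exp n (\<lambda>\<epsilon>. \<Sum>j\<in>J. F j \<epsilon>) = (\<Sum>j\<in>J. rademacher_exp n (F j))"
  unfolding rademacher_exp_def by (subst sum.swap) (simp add: sum_divide_distrib)

lemma rademacher_exp_mult_const:
  "rademacher_exp n (\<lambda>\<epsilon>. F \<epsilon> * c) = rademacher_exp n F * c"
  unfolding rademacher_exp_def by (simp add: sum_distrib_right)

lemma rademacher_exp_square_linear:
  "rademacher_exp n (\<lambda>\<epsilon>. (\<Sum>i<n. u i * \<epsilon> i)\<^sup>2) = (\<Sum>i<n. (u i)\<^sup>2)"
proof -
  have "(\<Sum>\<epsilon>\<in>sign_vectors n. (\<Sum>i<n. u i * \<epsilon> i)\<^sup>2)
      = (\<Sum>i<n. \<Sum>k<n. u i * u k * (\<Sum>\<epsilon>\<in>sign_vectors n. \<epsilon> i * \<epsilon> k))"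
    by (simp add: power2_eq_square sum_product sum_distrib_left mult_ac sum.swap[of _ "sign_vectors n"])
  also have "\<dots> = (\<Sum>i<n. \<Sum>k<n. if i = k then 2 ^ n * (u i)\<^sup>2 else 0)"
    by (intro sum.cong refl) (auto simp: sum_sign_vectors_mult power2_eq_square)
  also have "\<dots> = 2 ^ n * (\<Sum>i<n. (u i)\<^sup>2)"
    by (simp add: sum_distrib_left)
  finally show ?thesis unfolding rademacher_exp_def by simp
qed

lemma rademacher_exp_orthonormal_energy:
  assumes U: "orthonormal_matrix n U"
  shows "rademacher_exp n (\<lambda>\<epsilon>. \<Sum>j<n. (\<Sum>i<n. U i j * \<epsilon> i)\<^sup>2 * c j) = (\<Sum>j<n. c j)"
proof -
  have "(\<Sum>i<n. (U i j)\<^sup>2) = 1" if "j < n" for j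
    using orthonormal_matrix_cols[OF U that that] by (simp add: power2_eq_square)
  then show ?thesis
    by (simp add: rademacher_exp_sum rademacher_exp_mult_const rademacher_exp_square_linear)
qed

section \<open>Rademacher averages over an ellipsoid\<close>

text \<open>P |v|^2 + Q |v|_G^2 \<le> 1, where |v|_G^2 = sup_a (2 <a, v> - a^T G a) is the squared norm dual to
  the quadratic form of G, written without inverting G.\<close>
definition in_weighted_ellipsoid ::
    "nat \<Rightarrow> (nat \<Rightarrow> nat \<Rightarrow> real) \<Rightarrow> real \<Rightarrow> real \<Rightarrow> (nat \<Rightarrow> real) \<Rightarrow> bool"
  where "in_weighted_ellipsoid n G P Q v \<longleftrightarrow>
    (\<exists>N. (\<forall>a. 2 * (\<Sum>i<n. a i * v i) - (\<Sum>i<n. \<Sum>k<n. a i * a k * G i k) \<le> N)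
         \<and> P * (\<Sum>i<n. (v i)\<^sup>2) + Q * N \<le> 1)"

lemma diagonal_pairing_bound:
  fixes w e L :: "nat \<Rightarrow> real"
  assumes L: "\<forall>j<n. 0 \<le> L j" and P: "0 \<le> P" and Q: "0 < Q"
    and dual: "\<forall>\<alpha>. 2 * (\<Sum>j<n. \<alpha> j * w j) - (\<Sum>j<n. L j * (\<alpha> j)\<^sup>2) \<le> N"
    and budget: "P * (\<Sum>j<n. (w j)\<^sup>2) + Q * N \<le> 1"
  shows "2 * (\<Sum>j<n. e j * w j) - (\<Sum>j<n. (e j)\<^sup>2 * (L j / (P * L j + Q))) \<le> 1"
proof -
  define d where "d j = P * L j + Q" for j
  define \<alpha> where "\<alpha> j = e j / d j" for j
  define \<beta> where "\<beta> j = L j * \<alpha> j" for j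
  have d: "0 < d j" if "j < n" for j
    using L P Q that by (simp add: d_def add_nonneg_pos)
  \<comment> \<open>Split e as P \<beta> + Q \<alpha> and pair each part with one of the two constraints.\<close>
  have \<alpha>d: "e j = \<alpha> j * d j" if "j < n" for j
    using d[OF that] by (simp add: \<alpha>_def)
  have e: "e j = P * \<beta> j + Q * \<alpha> j" if "j < n" for j
    using \<alpha>d[OF that] by (simp add: \<beta>_def d_def algebra_simps)
  have e2: "(e j)\<^sup>2 * (L j / d j) = P * (\<beta> j)\<^sup>2 + Q * (L j * (\<alpha> j)\<^sup>2)" if "j < n" for j
  proof -
    have "(e j)\<^sup>2 * (L j / d j) = (\<alpha> j)\<^sup>2 * L j * d j"
      using \<alpha>d[OF that] d[OF that] by (simp add: power2_eq_square field_simps)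
    then show ?thesis by (simp add: \<beta>_def d_def power2_eq_square algebra_simps)
  qed
  have "2 * (\<beta> j * w j) - (\<beta> j)\<^sup>2 \<le> (w j)\<^sup>2" for j
    using zero_le_power2[of "\<beta> j - w j"] unfolding power2_diff by (simp add: mult.assoc)
  then have ball: "2 * (\<Sum>j<n. \<beta> j * w j) - (\<Sum>j<n. (\<beta> j)\<^sup>2) \<le> (\<Sum>j<n. (w j)\<^sup>2)"
    using sum_mono[of "{..<n}" "\<lambda>j. 2 * (\<beta> j * w j) - (\<beta> j)\<^sup>2" "\<lambda>j. (w j)\<^sup>2"]
    by (simp add: sum_subtractf sum_distrib_left)
  have "2 * (\<Sum>j<n. e j * w j) - (\<Sum>j<n. (e j)\<^sup>2 * (L j / d j))
      = P * (2 * (\<Sum>j<n. \<beta> j * w j) - (\<Sum>j<n. (\<beta> j)\<^sup>2))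
        + Q * (2 * (\<Sum>j<n. \<alpha> j * w j) - (\<Sum>j<n. L j * (\<alpha> j)\<^sup>2))"
    using e e2 by (simp add: sum.distrib sum_distrib_left algebra_simps)
  also have "\<dots> \<le> P * (\<Sum>j<n. (w j)\<^sup>2) + Q * N"
    using ball dual P Q by (intro add_mono mult_left_mono) auto
  finally show ?thesis
    using budget by (simp add: d_def)
qed

lemma orthonormal_pairing_bound:
  fixes U G :: "nat \<Rightarrow> nat \<Rightarrow> real" and L v \<epsilon> :: "nat \<Rightarrow> real"
  assumes U: "orthonormal_matrix n U" and G: "\<forall>i<n. \<forall>k<n. G i k = (\<Sum>j<n. U i j * L j * U k j)"
    and L: "\<forall>j<n. 0 \<le> L j" and P: "0 \<le> P" and Q: "0 < Q"
    and v: "in_weighted_ellipsoid n G P Q v" and s: "0 < s"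
  shows "(\<Sum>i<n. \<epsilon> i * v i)
         \<le> 1 / (2 * s) + s / 2 * (\<Sum>j<n. (\<Sum>i<n. U i j * \<epsilon> i)\<^sup>2 * (L j / (P * L j + Q)))"
proof -
  obtain N where dual: "\<forall>a. 2 * (\<Sum>i<n. a i * v i) - (\<Sum>i<n. \<Sum>k<n. a i * a k * G i k) \<le> N"
    and budget: "P * (\<Sum>i<n. (v i)\<^sup>2) + Q * N \<le> 1"
    using v unfolding in_weighted_ellipsoid_def by blast
  define w where "w j = (\<Sum>i<n. U i j * v i)" for j
  define u where "u j = (\<Sum>i<n. U i j * \<epsilon> i)" for j
  have "\<forall>\<alpha>. 2 * (\<Sum>j<n. \<alpha> j * w j) - (\<Sum>j<n. L j * (\<alpha> j)\<^sup>2) \<le> N"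
  proof
    fix \<alpha>
    have "(\<Sum>i<n. (\<Sum>p<n. U i p * \<alpha> p) * v i) = (\<Sum>j<n. \<alpha> j * w j)"
      unfolding w_def sum_distrib_left sum_distrib_right by (subst sum.swap) (simp add: mult_ac)
    then show "2 * (\<Sum>j<n. \<alpha> j * w j) - (\<Sum>j<n. L j * (\<alpha> j)\<^sup>2) \<le> N"
      using dual[rule_format, of "\<lambda>i. \<Sum>p<n. U i p * \<alpha> p"] orthonormal_matrix_quadratic_form[OF U G]
      by simp
  qed
  moreover have "(\<Sum>j<n. (w j)\<^sup>2) = (\<Sum>i<n. (v i)\<^sup>2)"
    using orthonormal_matrix_transpose_inner[OF U, of v v] by (simp add: w_def power2_eq_square)
  moreover have "(\<Sum>j<n. u j * w j) = (\<Sum>i<n. \<epsilon> i * v i)"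
    using orthonormal_matrix_transpose_inner[OF U, of \<epsilon> v] by (simp add: u_def w_def)
  then have "(\<Sum>j<n. (s * u j) * w j) = s * (\<Sum>i<n. \<epsilon> i * v i)"
    by (simp add: mult.assoc flip: sum_distrib_left)
  ultimately have "2 * s * (\<Sum>i<n. \<epsilon> i * v i) - s\<^sup>2 * (\<Sum>j<n. (u j)\<^sup>2 * (L j / (P * L j + Q))) \<le> 1"
    using diagonal_pairing_bound[OF L P Q, of w N "\<lambda>j. s * u j"] budget
    by (simp add: power_mult_distrib sum_distrib_left mult_ac)
  then show ?thesis
    unfolding u_def[symmetric] using s by (simp add: field_simps power2_eq_square)
qed

lemma le_mult_sqrt_of_scaled_bounds:
  fixes x c T :: real
  assumes bound: "\<And>s. 0 < s \<Longrightarrow> x \<le> c / (2 * s) + c * s / 2 * T" and c: "0 \<le> c" and T: "0 \<le> T"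
  shows "x \<le> c * sqrt T"
proof (cases "T = 0")
  case False
  then have "0 < sqrt T" using T by simp
  have "c / (2 * (1 / sqrt T)) + c * (1 / sqrt T) / 2 * T = c * sqrt T / 2 + c / 2 * (T / sqrt T)"
    by (simp add: field_simps)
  also have "\<dots> = c * sqrt T"
    using T by (simp add: real_div_sqrt)
  finally show ?thesis
    using bound[of "1 / sqrt T"] \<open>0 < sqrt T\<close> by simp
next
  case True
  show ?thesis
  proof (rule ccontr)
    assume "\<not> x \<le> c * sqrt T"
    then have x: "0 < x" using True by simp
    show False
    proof (cases "c = 0")
      case True
      then show False using bound[of 1] x by simp
    next
      case False
      then show False
        using bound[of "c / x"] x c \<open>T = 0\<close> by (simp add: field_simps)
    qed
  qed
qed

lemma rademacher_sup_le_sqrt_trace: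
  fixes U G :: "nat \<Rightarrow> nat \<Rightarrow> real" and L :: "nat \<Rightarrow> real" and v :: "'f \<Rightarrow> nat \<Rightarrow> real"
  assumes U: "orthonormal_matrix n U" and G: "\<forall>i<n. \<forall>k<n. G i k = (\<Sum>j<n. U i j * L j * U k j)"
    and L: "\<forall>j<n. 0 \<le> L j" and P: "0 \<le> P" and Q: "0 < Q" and c: "0 \<le> c"
    and nonempty: "F f\<^sub>0" and v: "\<And>f. F f \<Longrightarrow> in_weighted_ellipsoid n G P Q (v f)"
  shows "rademacher_exp n (\<lambda>\<epsilon>. Sup {c * (\<Sum>i<n. \<epsilon> i * v f i) | f. F f})
         \<le> c * sqrt (\<Sum>j<n. L j / (P * L j + Q))"
proof -
  \<comment> \<open>Bounding each supremum by 1/(2s) + s \<Gamma>/2 first, and optimising in s only after averaging,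
    replaces Jensen's inequality for the square root.\<close>
  define \<gamma> where "\<gamma> j = L j / (P * L j + Q)" for j
  define \<Gamma> where "\<Gamma> \<epsilon> = (\<Sum>j<n. (\<Sum>i<n. U i j * \<epsilon> i)\<^sup>2 * \<gamma> j)" for \<epsilon> :: "nat \<Rightarrow> real"
  have "rademacher_exp n (\<lambda>\<epsilon>. Sup {c * (\<Sum>i<n. \<epsilon> i * v f i) | f. F f})
        \<le> c / (2 * s) + c * s / 2 * (\<Sum>j<n. \<gamma> j)" if s: "0 < s" for s
  proof -
    have "Sup {c * (\<Sum>i<n. \<epsilon> i * v f i) | f. F f} \<le> c / (2 * s) + c * s / 2 * \<Gamma> \<epsilon>" for \<epsilon>
    proof (rule cSup_least)
      show "{c * (\<Sum>i<n. \<epsilon> i * v f i) | f. F f} \<noteq> {}" using nonempty by blast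
    next
      fix x assume "x \<in> {c * (\<Sum>i<n. \<epsilon> i * v f i) | f. F f}"
      then obtain f where x: "x = c * (\<Sum>i<n. \<epsilon> i * v f i)" and "F f" by blast
      have "(\<Sum>i<n. \<epsilon> i * v f i) \<le> 1 / (2 * s) + s / 2 * \<Gamma> \<epsilon>"
        using orthonormal_pairing_bound[OF U G L P Q v[OF \<open>F f\<close>] s] unfolding \<Gamma>_def \<gamma>_def .
      from mult_left_mono[OF this c] show "x \<le> c / (2 * s) + c * s / 2 * \<Gamma> \<epsilon>"
        unfolding x by (simp add: distrib_left)
    qed
    then have "rademacher_exp n (\<lambda>\<epsilon>. Sup {c * (\<Sum>i<n. \<epsilon> i * v f i) | f. F f})
          \<le> rademacher_exp n (\<lambda>\<epsilon>. c / (2 * s) + c * s / 2 * \<Gamma> \<epsilon>)"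
      by (rule rademacher_exp_mono)
    also have "\<dots> = c / (2 * s) + c * s / 2 * (\<Sum>j<n. \<gamma> j)"
      unfolding rademacher_exp_affine \<Gamma>_def rademacher_exp_orthonormal_energy[OF U] ..
    finally show ?thesis .
  qed
  moreover have "0 \<le> (\<Sum>j<n. \<gamma> j)"
    using L P Q unfolding \<gamma>_def by (intro sum_nonneg) (simp add: add_nonneg_pos)
  ultimately show ?thesis
    using le_mult_sqrt_of_scaled_bounds c unfolding \<gamma>_def by blast
qed

section \<open>Kernels and reproducing kernel Hilbert spaces\<close>

lemma psd_kernel_sym: "psd_kernel Zs K \<Longrightarrow> z \<in> Zs \<Longrightarrow> w \<in> Zs \<Longrightarrow> K z w = K w z"
  unfolding psd_kernel_def by blast

lemma psd_kernel_nonneg: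
  fixes m :: nat and z :: "nat \<Rightarrow> 'z"
  assumes "psd_kernel Zs K" and "\<forall>i<m. z i \<in> Zs"
  shows "0 \<le> (\<Sum>i<m. \<Sum>k<m. c i * c k * K (z i) (z k))"
proof -
  have "\<forall>(m::nat) (zs::nat \<Rightarrow> _) (c::nat \<Rightarrow> real).
          (\<forall>i<m. zs i \<in> Zs) \<longrightarrow> 0 \<le> (\<Sum>i<m. \<Sum>j<m. c i * c j * K (zs i) (zs j))"
    using assms(1) unfolding psd_kernel_def by (rule conjunct2)
  from this[rule_format, OF assms(2)[rule_format]] show ?thesis .
qed

lemma psd_kernel_gram_decomposition:
  assumes K: "psd_kernel Zs K" and z: "\<forall>i<n. z i \<in> Zs"
  shows "\<exists>U L. orthonormal_matrix n U \<and> (\<forall>j<n. 0 \<le> L j)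
           \<and> (\<forall>i<n. \<forall>k<n. K (z i) (z k) = (\<Sum>j<n. U i j * L j * U k j))"
proof -
  have "\<forall>i<n. \<forall>k<n. K (z i) (z k) = K (z k) (z i)"
    using psd_kernel_sym[OF K] z by blast
  then obtain U L where U: "orthonormal_matrix n U"
    and G: "\<forall>i<n. \<forall>k<n. K (z i) (z k) = (\<Sum>j<n. U i j * L j * U k j)"
    using symmetric_matrix_spectral_decomposition[of n "\<lambda>i k. K (z i) (z k)"] by blast
  have "0 \<le> L j" if "j < n" for j
  proof -
    have "(\<Sum>p<n. L p * (of_bool (p = j))\<^sup>2) = (\<Sum>p<n. L p * of_bool (p = j))"
      by (intro sum.cong) auto
    then have "L j = (\<Sum>i<n. \<Sum>k<n. U i j * U k j * K (z i) (z k))"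
      using orthonormal_matrix_quadratic_form[OF U G, of "\<lambda>p. of_bool (p = j)"] that by simp
    also have "0 \<le> \<dots>"
      by (rule psd_kernel_nonneg[OF K z])
    finally show ?thesis .
  qed
  with U G show ?thesis by blast
qed

context
  fixes Zs :: "'z set" and K :: "'z \<Rightarrow> 'z \<Rightarrow> real" and H :: "('z \<Rightarrow> real) set"
    and ip :: "('z \<Rightarrow> real) \<Rightarrow> ('z \<Rightarrow> real) \<Rightarrow> real"
  assumes H: "rkhs Zs K H ip"
begin

lemma rkhs_add: "f \<in> H \<Longrightarrow> g \<in> H \<Longrightarrow> (\<lambda>z. f z + g z) \<in> H"
  using H unfolding rkhs_def by blast

lemma rkhs_scale: "f \<in> H \<Longrightarrow> (\<lambda>z. a * f z) \<in> H"
  using H unfolding rkhs_def by blast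

lemma rkhs_zero: "(\<lambda>z. 0) \<in> H"
  using H unfolding rkhs_def by blast

lemma rkhs_ip_sym: "f \<in> H \<Longrightarrow> g \<in> H \<Longrightarrow> ip f g = ip g f"
  using H unfolding rkhs_def by blast

lemma rkhs_ip_add:
  "f \<in> H \<Longrightarrow> g \<in> H \<Longrightarrow> h \<in> H \<Longrightarrow> ip (\<lambda>z. f z + g z) h = ip f h + ip g h"
  using H unfolding rkhs_def by blast

lemma rkhs_ip_scale: "f \<in> H \<Longrightarrow> g \<in> H \<Longrightarrow> ip (\<lambda>z. a * f z) g = a * ip f g"
  using H unfolding rkhs_def by blast

lemma rkhs_ip_nonneg: "f \<in> H \<Longrightarrow> 0 \<le> ip f f"
  using H unfolding rkhs_def by blast

lemma rkhs_ksec: "z \<in> Zs \<Longrightarrow> ksec Zs K z \<in> H"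
  using H unfolding rkhs_def by blast

lemma rkhs_reproducing: "f \<in> H \<Longrightarrow> z \<in> Zs \<Longrightarrow> ip f (ksec Zs K z) = f z"
  using H unfolding rkhs_def by blast

lemma rkhs_diff: "f \<in> H \<Longrightarrow> g \<in> H \<Longrightarrow> (\<lambda>z. f z - g z) \<in> H"
  using rkhs_add[of f "\<lambda>z. (-1) * g z"] rkhs_scale[of g "-1"] by simp

lemma rkhs_ip_diff:
  "f \<in> H \<Longrightarrow> g \<in> H \<Longrightarrow> h \<in> H \<Longrightarrow> ip (\<lambda>z. f z - g z) h = ip f h - ip g h"
  using rkhs_ip_add[of f "\<lambda>z. (-1) * g z" h] rkhs_ip_scale[of g h "-1"] rkhs_scale[of g "-1"] by simp

lemma rkhs_kernel_combination:
  fixes m :: nat and z :: "nat \<Rightarrow> 'z"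
  assumes z: "\<forall>i<m. z i \<in> Zs" and h: "h \<in> H"
  shows "(\<lambda>w. \<Sum>i<m. a i * ksec Zs K (z i) w) \<in> H \<and>
         ip (\<lambda>w. \<Sum>i<m. a i * ksec Zs K (z i) w) h = (\<Sum>i<m. a i * h (z i))"
  using z
proof (induction m)
  case 0
  then show ?case using rkhs_zero rkhs_ip_scale[OF rkhs_zero h, of 0] by simp
next
  case (Suc m)
  let ?F = "\<lambda>w. \<Sum>i<m. a i * ksec Zs K (z i) w"
  let ?k = "\<lambda>w. a m * ksec Zs K (z m) w"
  have F: "?F \<in> H" and Fh: "ip ?F h = (\<Sum>i<m. a i * h (z i))" using Suc by auto
  have zm: "ksec Zs K (z m) \<in> H" using Suc.prems by (simp add: rkhs_ksec)
  then have k: "?k \<in> H" by (rule rkhs_scale)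
  have "ip ?k h = a m * h (z m)"
    using rkhs_ip_scale[OF zm h] rkhs_ip_sym[OF zm h] rkhs_reproducing[OF h] Suc.prems by simp
  then show ?case
    using rkhs_add[OF F k] rkhs_ip_add[OF F k h] Fh by simp
qed

lemma rkhs_dual_bound:
  fixes m :: nat and z :: "nat \<Rightarrow> 'z"
  assumes z: "\<forall>i<m. z i \<in> Zs" and h: "h \<in> H"
  shows "2 * (\<Sum>i<m. a i * h (z i)) - (\<Sum>i<m. \<Sum>k<m. a i * a k * K (z i) (z k)) \<le> ip h h"
proof -
  define F where "F = (\<lambda>w. \<Sum>i<m. a i * ksec Zs K (z i) w)"
  have F: "F \<in> H" and Fh: "ip F h = (\<Sum>i<m. a i * h (z i))"
    using rkhs_kernel_combination[OF z h] unfolding F_def by auto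
  have "ip F F = (\<Sum>i<m. a i * F (z i))"
    using rkhs_kernel_combination[OF z F] unfolding F_def by simp
  also have "\<dots> = (\<Sum>i<m. \<Sum>k<m. a k * a i * K (z k) (z i))"
    unfolding F_def using z by (simp add: ksec_def sum_distrib_left mult_ac)
  also have "\<dots> = (\<Sum>i<m. \<Sum>k<m. a i * a k * K (z i) (z k))"
    by (rule sum.swap)
  finally have FF: "ip F F = (\<Sum>i<m. \<Sum>k<m. a i * a k * K (z i) (z k))" .
  have hF: "(\<lambda>w. h w - F w) \<in> H" by (rule rkhs_diff[OF h F])
  have "0 \<le> ip (\<lambda>w. h w - F w) (\<lambda>w. h w - F w)" by (rule rkhs_ip_nonneg[OF hF])
  also have "\<dots> = ip h h - 2 * ip F h + ip F F"
    using rkhs_ip_diff[OF h F hF] rkhs_ip_sym[OF h hF] rkhs_ip_sym[OF F hF]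
      rkhs_ip_diff[OF h F h] rkhs_ip_diff[OF h F F] rkhs_ip_sym[OF h F] by simp
  finally show ?thesis using Fh FF by simp
qed

lemma rkhs_class_budget:
  assumes fH: "fH \<in> H" and f: "f \<in> H" and norm: "rk_norm ip (\<lambda>z. f z - fH z) \<le> 3 * rk_norm ip fH"
    and sample: "(1 / real n) * (\<Sum>i<n. (f (z i) - fH (z i))\<^sup>2) \<le> \<delta>" and \<delta>: "0 < \<delta>"
  shows "1 / (10 * real n * \<delta>) * (\<Sum>i<n. (f (z i) - fH (z i))\<^sup>2)
         + 1 / (10 * (max (rk_norm ip fH) 1)\<^sup>2) * ip (\<lambda>z. f z - fH z) (\<lambda>z. f z - fH z) \<le> 1"
proof -
  define M where "M = max (rk_norm ip fH) 1"
  define h where "h = (\<lambda>z. f z - fH z)"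
  have h: "0 \<le> ip h h"
    using rkhs_ip_nonneg[OF rkhs_diff[OF f fH]] unfolding h_def .
  have "sqrt (ip h h) \<le> 3 * M"
    using norm max.cobounded1[of "rk_norm ip fH" 1] unfolding h_def M_def rk_norm_def by linarith
  then have "ip h h \<le> (3 * M)\<^sup>2"
    using h power_mono[OF \<open>sqrt (ip h h) \<le> 3 * M\<close>, of 2] by simp
  then have norm_part: "1 / (10 * M\<^sup>2) * ip h h \<le> 9 / 10"
    by (simp add: M_def power_mult_distrib field_simps)
  have "1 / (10 * real n * \<delta>) * (\<Sum>i<n. (f (z i) - fH (z i))\<^sup>2)
      = (1 / real n * (\<Sum>i<n. (f (z i) - fH (z i))\<^sup>2)) / (10 * \<delta>)"
    by simp
  moreover have "\<dots> \<le> \<delta> / (10 * \<delta>)"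
    using \<delta> by (intro divide_right_mono[OF sample]) simp
  ultimately have "1 / (10 * real n * \<delta>) * (\<Sum>i<n. (f (z i) - fH (z i))\<^sup>2) \<le> 1 / 10"
    using \<delta> by simp
  with norm_part show ?thesis unfolding M_def h_def by linarith
qed

lemma rkhs_class_in_weighted_ellipsoid:
  assumes z: "\<forall>i<n. z i \<in> Zs" and fH: "fH \<in> H" and \<delta>: "0 < \<delta>"
    and f: "f \<in> H \<and> rk_norm ip (\<lambda>z. f z - fH z) \<le> 3 * rk_norm ip fH
             \<and> (1 / real n) * (\<Sum>i<n. (f (z i) - fH (z i))\<^sup>2) \<le> \<delta>"
  shows "in_weighted_ellipsoid n (\<lambda>i k. K (z i) (z k))
           (1 / (10 * real n * \<delta>)) (1 / (10 * (max (rk_norm ip fH) 1)\<^sup>2)) (\<lambda>i. f (z i) - fH (z i))"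
  unfolding in_weighted_ellipsoid_def
proof (intro exI conjI allI)
  have h: "(\<lambda>z. f z - fH z) \<in> H" using rkhs_diff f fH by blast
  show "2 * (\<Sum>i<n. a i * (f (z i) - fH (z i))) - (\<Sum>i<n. \<Sum>k<n. a i * a k * K (z i) (z k))
      \<le> ip (\<lambda>z. f z - fH z) (\<lambda>z. f z - fH z)" for a
    using rkhs_dual_bound[OF z h, of a] by simp
  show "1 / (10 * real n * \<delta>) * (\<Sum>i<n. (f (z i) - fH (z i))\<^sup>2)
      + 1 / (10 * (max (rk_norm ip fH) 1)\<^sup>2) * ip (\<lambda>z. f z - fH z) (\<lambda>z. f z - fH z) \<le> 1"
    using rkhs_class_budget[OF fH _ _ _ \<delta>] f by blast
qed

end

lemma ratio_le_min:
  fixes L P Q :: real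
  assumes "0 \<le> L" "0 < P" "0 < Q"
  shows "L / (P * L + Q) \<le> min (1 / P) (L / Q)"
proof -
  have "L / (P * L + Q) \<le> L / (P * L)" if "0 < L"
    using assms that by (intro divide_left_mono) (auto intro!: mult_pos_pos add_pos_pos)
  then have "L / (P * L + Q) \<le> 1 / P"
    using assms by (cases "L = 0") auto
  moreover have "L / (P * L + Q) \<le> L / Q"
    using assms by (intro divide_left_mono) (auto intro!: mult_pos_pos add_nonneg_pos)
  ultimately show ?thesis by simp
qed

lemma sum_regularized_ratio_le:
  fixes L :: "nat \<Rightarrow> real" and \<delta> M :: real
  assumes L: "\<forall>j<n. 0 \<le> L j" and \<delta>: "0 < \<delta>" and M: "1 \<le> M"
  shows "(\<Sum>j<n. L j / (1 / (10 * real n * \<delta>) * L j + 1 / (10 * M\<^sup>2)))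
         \<le> 10 * M\<^sup>2 * real n * (\<Sum>j<n. min \<delta> (L j / real n))"
  unfolding sum_distrib_left
proof (rule sum_mono)
  fix j assume "j \<in> {..<n}"
  then have n: "0 < real n" and Lj: "0 \<le> L j" using L by auto
  have "L j / (1 / (10 * real n * \<delta>) * L j + 1 / (10 * M\<^sup>2))
      \<le> min (10 * real n * \<delta>) (10 * M\<^sup>2 * L j)"
    using ratio_le_min[OF Lj, of "1 / (10 * real n * \<delta>)" "1 / (10 * M\<^sup>2)"] n \<delta> M by (simp add: mult_ac)
  also have "\<dots> \<le> min (10 * M\<^sup>2 * real n * \<delta>) (10 * M\<^sup>2 * L j)"
    using one_le_power[OF M, of 2] n \<delta> by (intro min.mono order.refl mult_right_mono) auto
  also have "\<dots> = 10 * M\<^sup>2 * real n * min \<delta> (L j / real n)"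
    using n by (simp add: min_mult_distrib_left)
  finally show "L j / (1 / (10 * real n * \<delta>) * L j + 1 / (10 * M\<^sup>2))
      \<le> 10 * M\<^sup>2 * real n * min \<delta> (L j / real n)" .
qed

theorem rkhs_local_rademacher_bound:
  fixes K :: "'z \<Rightarrow> 'z \<Rightarrow> real" and z :: "nat \<Rightarrow> 'z"
  assumes kernel: "psd_kernel Zs K" and H: "rkhs Zs K H ip" and fH: "fH \<in> H"
    and z: "\<forall>i<n. z i \<in> Zs" and \<delta>: "0 < \<delta>"
  shows "rademacher_exp n (\<lambda>\<epsilon>. Sup {(1 / real n) * (\<Sum>i<n. \<epsilon> i * (f (z i) - fH (z i))) | f.
            f \<in> H \<and> rk_norm ip (\<lambda>z. f z - fH z) \<le> 3 * rk_norm ip fH \<and>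
            (1 / real n) * (\<Sum>i<n. (f (z i) - fH (z i))\<^sup>2) \<le> \<delta>})
         \<le> sqrt 10 * max (rk_norm ip fH) 1 * sqrt ((1 / real n) *
              (\<Sum>j<n. min \<delta> (sorted_eigs (Matrix.mat n n (\<lambda>(i, j). K (z i) (z j) / real n)) ! j)))"
proof -
  define M where "M = max (rk_norm ip fH) 1"
  \<comment> \<open>Weights under which the two constraints of the class use 1/10 and 9/10 of the budget.\<close>
  define P where "P = 1 / (10 * real n * \<delta>)"
  define Q where "Q = 1 / (10 * M\<^sup>2)"
  have M: "1 \<le> M" by (simp add: M_def)
  obtain U L where U: "orthonormal_matrix n U" and L: "\<forall>j<n. 0 \<le> L j"
    and G: "\<forall>i<n. \<forall>k<n. K (z i) (z k) = (\<Sum>j<n. U i j * L j * U k j)"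
    using psd_kernel_gram_decomposition[OF kernel z] by blast
  define S where "S = (\<Sum>j<n. min \<delta> (L j / real n))"
  have "ip (\<lambda>z. 0) (\<lambda>z. 0) = 0"
    using rkhs_ip_scale[OF H rkhs_zero[OF H] rkhs_zero[OF H], of 0] by simp
  then have center: "fH \<in> H \<and> rk_norm ip (\<lambda>z. fH z - fH z) \<le> 3 * rk_norm ip fH
      \<and> (1 / real n) * (\<Sum>i<n. (fH (z i) - fH (z i))\<^sup>2) \<le> \<delta>"
    using fH \<delta> rkhs_ip_nonneg[OF H fH] by (simp add: rk_norm_def)
  have "rademacher_exp n (\<lambda>\<epsilon>. Sup {(1 / real n) * (\<Sum>i<n. \<epsilon> i * (f (z i) - fH (z i))) | f.
            f \<in> H \<and> rk_norm ip (\<lambda>z. f z - fH z) \<le> 3 * rk_norm ip fH \<and>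
            (1 / real n) * (\<Sum>i<n. (f (z i) - fH (z i))\<^sup>2) \<le> \<delta>})
        \<le> 1 / real n * sqrt (\<Sum>j<n. L j / (P * L j + Q))"
  proof (rule rademacher_sup_le_sqrt_trace[OF U G L, where c = "1 / real n"
        and v = "\<lambda>f i. f (z i) - fH (z i)" and F = "\<lambda>f. f \<in> H
          \<and> rk_norm ip (\<lambda>z. f z - fH z) \<le> 3 * rk_norm ip fH
          \<and> (1 / real n) * (\<Sum>i<n. (f (z i) - fH (z i))\<^sup>2) \<le> \<delta>"])
    show "0 \<le> P" "0 < Q" "0 \<le> 1 / real n"
      using \<delta> M by (simp_all add: P_def Q_def)
    show "in_weighted_ellipsoid n (\<lambda>i k. K (z i) (z k)) P Q (\<lambda>i. f (z i) - fH (z i))"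
      if "f \<in> H \<and> rk_norm ip (\<lambda>z. f z - fH z) \<le> 3 * rk_norm ip fH
          \<and> (1 / real n) * (\<Sum>i<n. (f (z i) - fH (z i))\<^sup>2) \<le> \<delta>" for f
      using rkhs_class_in_weighted_ellipsoid[OF H z fH \<delta> that] unfolding P_def Q_def M_def .
  qed (rule center)
  also have "\<dots> \<le> 1 / real n * sqrt (10 * M\<^sup>2 * real n * S)"
    using sum_regularized_ratio_le[OF L \<delta> M] unfolding P_def Q_def S_def
    by (intro mult_left_mono real_sqrt_le_mono) simp_all
  also have "\<dots> = sqrt 10 * M * sqrt (1 / real n * S)"
    using M by (cases "n = 0") (simp_all add: real_sqrt_mult real_sqrt_divide field_simps)
  also have "S = (\<Sum>j<n. min \<delta> (sorted_eigs (Matrix.mat n n (\<lambda>(i, j). K (z i) (z j) / real n)) ! j))"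
    unfolding S_def using G
    by (intro sum_sorted_eigs[OF U, of "\<lambda>i k. K (z i) (z k) / real n" "\<lambda>j. L j / real n" "min \<delta>",
          symmetric]) (simp add: sum_divide_distrib)
  finally show ?thesis unfolding M_def .
qed

theorem lemma10:
  fixes \<rho> :: "(real ^ 'r) measure" and Zs :: "(real ^ 'r) set" and Xs :: "(real ^ 'p) set"
    and K :: "real ^ 'r \<Rightarrow> real ^ 'r \<Rightarrow> real"
    and H :: "(real ^ 'r \<Rightarrow> real) set"
    and ip :: "(real ^ 'r \<Rightarrow> real) \<Rightarrow> (real ^ 'r \<Rightarrow> real) \<Rightarrow> real"
    and fH :: "real ^ 'r \<Rightarrow> real" and g :: "real ^ 'p \<Rightarrow> real ^ 'r"
    and X :: "nat \<Rightarrow> real ^ 'p" and n :: nat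
    and J :: "nat set" and \<mu> :: "nat \<Rightarrow> real" and \<phi> :: "nat \<Rightarrow> real ^ 'r \<Rightarrow> real"
    and \<delta> :: real
  assumes rho: "prob_space \<rho>" "space \<rho> = Zs" "sets \<rho> = sets (restrict_space borel Zs)"
    and kernel: "psd_kernel Zs K"
    and H: "rkhs Zs K H ip"
    and fH: "fH \<in> H"
    and A3: "assumption_A3 \<rho> K J \<mu> \<phi>"
    and g: "g \<in> borel_measurable (restrict_space borel Xs)" "g ` Xs \<subseteq> Zs"
    and X: "\<forall>i<n. X i \<in> Xs"
    and \<delta>: "\<delta> > 0"
  shows "rademacher_exp n (\<lambda>\<epsilon>. Sup {(1 / real n) * (\<Sum>i<n. \<epsilon> i * (f (g (X i)) - fH (g (X i)))) | f.
            f \<in> H \<and> rk_norm ip (\<lambda>z. f z - fH z) \<le> 3 * rk_norm ip fH \<and>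
            (1 / real n) * (\<Sum>i<n. (f (g (X i)) - fH (g (X i)))\<^sup>2) \<le> \<delta>})
         \<le> sqrt 10 * max (rk_norm ip fH) 1 * Rhat K g X n \<delta>"
proof -
  \<comment> \<open>The bound holds for every sample.\<close>
  have "\<forall>i<n. g (X i) \<in> Zs" using X g(2) by auto
  from rkhs_local_rademacher_bound[OF kernel H fH this \<delta>] show ?thesis
    unfolding Rhat_def gram_mat_def .
qed

end
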